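(* For any group $A$, the assignment $q\mapsto\mathrm{Ker}(q)$ induces a bijection $$\bigsqcup_{B<A}\mathsf{Desc}^1(\mathsf T^l_{\imath_B},(B,m_B))\;\cong\;\mathsf{Fac}(A),$$ where $B$ ranges over proper subgroups of $A$ and $\imath_B:B\hookrightarrow A$ is the inclusion.
   Context: For a subgroup $B$ of $A$ with inclusion $\imath_B$, $\mathcal Z^1(\mathsf T^l_{\imath_B},(B,m_B))$ is identified with the set of maps $q:A\to B$ satisfying (ZL1) $q(1_A)=1_A$; (ZL2) $q(ba)=b\,q(a)$ for all $a\in A,b\in B$; (ZL3) $q(aa')=q(a\,q(a'))$ for all $a,a'\in A$ (exactly the algebra structures on the left $B$-set $B$ for the monad $A\otimes_B-$). $\mathsf{Desc}^1(\mathsf T^l_{\imath_B},(B,m_B))$ is its quotient by the relation $q\sim q'$ iff there is $b_0\in B$ with $q(a)b_0=q'(ab_0)$ for all $a\in A$ (isomorphism of the corresponding algebras). $\mathrm{Ker}(q)=\{a:q(a)=1_A\}$. $\mathsf{FAC}(A)$ is the set of pairs $(B,X)$ with $B$ a proper subgroup of $A$, $X$ a subgroup of $A$, $B\cap X=\{1_A\}$, $BX=A$; $\mathsf{Fac}(A)$ is its quotient by the equivalence $(B,X)\cong(B',X')$ iff $B=B'$ and $X,X'$ are conjugate in $A$. *)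

theory Defs
  imports "HOL-Algebra.Coset"
begin

text \<open>Z^1(T^l_{i_B},(B,m_B)): maps q : A -> B satisfying (ZL1)-(ZL3).\<close>
definition ZL :: "('a, 'b) monoid_scheme \<Rightarrow> 'a set \<Rightarrow> ('a \<Rightarrow> 'a) set" where
  "ZL G B = {q. q \<in> carrier G \<rightarrow> B
      \<and> q \<one>\<^bsub>G\<^esub> = \<one>\<^bsub>G\<^esub>
      \<and> (\<forall>a\<in>carrier G. \<forall>b\<in>B. q (b \<otimes>\<^bsub>G\<^esub> a) = b \<otimes>\<^bsub>G\<^esub> q a)
      \<and> (\<forall>a\<in>carrier G. \<forall>a'\<in>carrier G. q (a \<otimes>\<^bsub>G\<^esub> a') = q (a \<otimes>\<^bsub>G\<^esub> q a'))}"

definition desc_rel :: "('a, 'b) monoid_scheme \<Rightarrow> 'a set \<Rightarrow> (('a \<Rightarrow> 'a) \<times> ('a \<Rightarrow> 'a)) set" where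
  "desc_rel G B = {(q, q'). q \<in> ZL G B \<and> q' \<in> ZL G B
      \<and> (\<exists>b0\<in>B. \<forall>a\<in>carrier G. q a \<otimes>\<^bsub>G\<^esub> b0 = q' (a \<otimes>\<^bsub>G\<^esub> b0))}"

definition Desc1 :: "('a, 'b) monoid_scheme \<Rightarrow> 'a set \<Rightarrow> ('a \<Rightarrow> 'a) set set" where
  "Desc1 G B = ZL G B // desc_rel G B"

definition KerQ :: "('a, 'b) monoid_scheme \<Rightarrow> ('a \<Rightarrow> 'a) \<Rightarrow> 'a set" where
  "KerQ G q = {a \<in> carrier G. q a = \<one>\<^bsub>G\<^esub>}"

definition FAC :: "('a, 'b) monoid_scheme \<Rightarrow> ('a set \<times> 'a set) set" where
  "FAC G = {(B, X). subgroup B G \<and> B \<noteq> carrier G \<and> subgroup X G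
      \<and> B \<inter> X = {\<one>\<^bsub>G\<^esub>} \<and> B <#>\<^bsub>G\<^esub> X = carrier G}"

definition fac_rel :: "('a, 'b) monoid_scheme \<Rightarrow> (('a set \<times> 'a set) \<times> ('a set \<times> 'a set)) set" where
  "fac_rel G = {((B, X), (B', X')). (B, X) \<in> FAC G \<and> (B', X') \<in> FAC G \<and> B = B'
      \<and> (\<exists>g\<in>carrier G. X' = (g <#\<^bsub>G\<^esub> X) #>\<^bsub>G\<^esub> inv\<^bsub>G\<^esub> g)}"

definition Fac :: "('a, 'b) monoid_scheme \<Rightarrow> ('a set \<times> 'a set) set set" where
  "Fac G = FAC G // fac_rel G"

definition ker_map :: "('a, 'b) monoid_scheme \<Rightarrow> 'a set \<times> ('a \<Rightarrow> 'a) set \<Rightarrow> ('a set \<times> 'a set) set" where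
  "ker_map G BQ = the_elem ((\<lambda>q. fac_rel G `` {(fst BQ, KerQ G q)}) ` snd BQ)"

end

theory Submission
  imports Defs
begin

text \<open>A map \<open>q \<in> ZL G B\<close> is determined by its kernel: every \<open>a\<close> factors uniquely as
  \<open>a = q a \<otimes> (inv (q a) \<otimes> a)\<close> with second factor in \<open>KerQ G q\<close>, so the kernel is a complement
  of \<open>B\<close>; conversely the \<open>B\<close>-component of the factorisation \<open>A = B X\<close> satisfies (ZL1)--(ZL3)
  and has kernel \<open>X\<close>. If \<open>q a \<otimes> b0 = q' (a \<otimes> b0)\<close> then the kernel of \<open>q'\<close> is the conjugate
  of that of \<open>q\<close> by \<open>inv b0\<close>; conversely, writing \<open>g = q g \<otimes> x0\<close> with \<open>x0\<close> in the kernel,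
  conjugating the kernel by \<open>g\<close> is the same as conjugating it by \<open>q g \<in> B\<close>.\<close>

definition complement_proj :: "('a, 'b) monoid_scheme \<Rightarrow> 'a set \<Rightarrow> 'a set \<Rightarrow> 'a \<Rightarrow> 'a" where
  "complement_proj G B X a = (THE b. b \<in> B \<and> inv\<^bsub>G\<^esub> b \<otimes>\<^bsub>G\<^esub> a \<in> X)"

context group
begin

lemma conj_set_eq_image: "X \<subseteq> carrier G \<Longrightarrow> (g <# X) #> h = (\<lambda>x. g \<otimes> x \<otimes> h) ` X"
  unfolding l_coset_def r_coset_def by auto

lemma conj_set_comp:
  assumes "X \<subseteq> carrier G" "g \<in> carrier G" "h \<in> carrier G"
  shows "(h <# ((g <# X) #> inv g)) #> inv h = ((h \<otimes> g) <# X) #> inv (h \<otimes> g)"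
  using assms
  by (simp add: coset_assoc l_coset_subset_G lcos_m_assoc coset_mult_assoc inv_mult_group)

lemma conj_set_one: "X \<subseteq> carrier G \<Longrightarrow> (\<one> <# X) #> inv \<one> = X"
  by (simp add: lcos_mult_one)

lemma conj_set_inv:
  assumes "X \<subseteq> carrier G" "g \<in> carrier G"
  shows "(inv g <# ((g <# X) #> inv g)) #> inv (inv g) = X"
  using conj_set_comp[of X g "inv g"] assms by (simp add: lcos_mult_one)

lemma inv_mult_cancel_left: "a \<in> carrier G \<Longrightarrow> b \<in> carrier G \<Longrightarrow> inv a \<otimes> (a \<otimes> b) = b"
  by (simp add: m_assoc[symmetric])

lemma mult_inv_cancel_left: "a \<in> carrier G \<Longrightarrow> b \<in> carrier G \<Longrightarrow> a \<otimes> (inv a \<otimes> b) = b"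
  by (simp add: m_assoc[symmetric])

lemma conj_eq_one_iff:
  assumes "g \<in> carrier G" "x \<in> carrier G"
  shows "inv g \<otimes> x \<otimes> g = \<one> \<longleftrightarrow> x = \<one>"
proof -
  have "inv g \<otimes> x \<otimes> g = \<one> \<longleftrightarrow> inv g \<otimes> x \<otimes> g = inv g \<otimes> g" using assms(1) by simp
  also have "\<dots> \<longleftrightarrow> inv g \<otimes> x = inv g" using assms by (intro right_cancel) simp_all
  also have "\<dots> \<longleftrightarrow> x = \<one>" using assms by (intro l_cancel_one) simp_all
  finally show ?thesis .
qed

lemma ZL_mem: "q \<in> ZL G B \<Longrightarrow> a \<in> carrier G \<Longrightarrow> q a \<in> B"
  unfolding ZL_def by auto

lemma ZL_one: "q \<in> ZL G B \<Longrightarrow> q \<one> = \<one>"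
  unfolding ZL_def by auto

lemma ZL_left_mult: "q \<in> ZL G B \<Longrightarrow> a \<in> carrier G \<Longrightarrow> b \<in> B \<Longrightarrow> q (b \<otimes> a) = b \<otimes> q a"
  unfolding ZL_def by auto

lemma ZL_mult_absorb:
  "q \<in> ZL G B \<Longrightarrow> a \<in> carrier G \<Longrightarrow> a' \<in> carrier G \<Longrightarrow> q (a \<otimes> a') = q (a \<otimes> q a')"
  unfolding ZL_def by auto

lemma ZL_carrier: "subgroup B G \<Longrightarrow> q \<in> ZL G B \<Longrightarrow> a \<in> carrier G \<Longrightarrow> q a \<in> carrier G"
  using ZL_mem subgroup.mem_carrier by metis

lemma ZL_fixes_subgroup:
  assumes "subgroup B G" "q \<in> ZL G B" "b \<in> B"
  shows "q b = b"
proof -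
  have "b \<in> carrier G" using subgroup.mem_carrier assms(1,3) .
  then have "q b = q (b \<otimes> \<one>)" by simp
  also have "\<dots> = b \<otimes> q \<one>" using ZL_left_mult[OF assms(2) one_closed assms(3)] .
  finally show ?thesis using ZL_one[OF assms(2)] \<open>b \<in> carrier G\<close> by simp
qed

lemma inv_ZL_mult_mem_KerQ:
  assumes "subgroup B G" "q \<in> ZL G B" "a \<in> carrier G"
  shows "inv (q a) \<otimes> a \<in> KerQ G q"
proof -
  have qa: "q a \<in> B" "q a \<in> carrier G" using ZL_mem ZL_carrier assms by auto
  then have "q (inv (q a) \<otimes> a) = inv (q a) \<otimes> q a"
    using ZL_left_mult[OF assms(2,3)] subgroup.m_inv_closed[OF assms(1)] by blast
  also have "\<dots> = \<one>" using qa(2) by (rule l_inv)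
  finally show ?thesis using assms(3) qa(2) unfolding KerQ_def by blast
qed

lemma ZL_eq_of_inv_mult_mem_KerQ:
  assumes "subgroup B G" "q \<in> ZL G B" "b \<in> B" "a \<in> carrier G" "inv b \<otimes> a \<in> KerQ G q"
  shows "q a = b"
proof -
  have b: "b \<in> carrier G" using subgroup.mem_carrier assms(1,3) .
  have "q a = q (b \<otimes> (inv b \<otimes> a))" using b assms(4) by (simp add: m_assoc[symmetric])
  also have "\<dots> = b \<otimes> q (inv b \<otimes> a)" using ZL_left_mult[OF assms(2) _ assms(3)] b assms(4) by simp
  also have "q (inv b \<otimes> a) = \<one>" using assms(5) unfolding KerQ_def by blast
  finally show ?thesis using b by simp
qed

lemma subgroup_KerQ:
  assumes "q \<in> ZL G B"
  shows "subgroup (KerQ G q) G"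
proof (rule subgroupI)
  show "KerQ G q \<subseteq> carrier G" "KerQ G q \<noteq> {}"
    using ZL_one[OF assms] unfolding KerQ_def by auto
  fix a a' assume "a \<in> KerQ G q" "a' \<in> KerQ G q"
  then have a: "a \<in> carrier G" "q a = \<one>" "a' \<in> carrier G" "q a' = \<one>"
    unfolding KerQ_def by auto
  have "q (inv a) = q (inv a \<otimes> q a)" using a by simp
  also have "\<dots> = \<one>" using ZL_mult_absorb[OF assms, of "inv a" a, symmetric] ZL_one[OF assms] a
    by simp
  finally show "inv a \<in> KerQ G q" using a unfolding KerQ_def by simp
  show "a \<otimes> a' \<in> KerQ G q" using ZL_mult_absorb[OF assms] a unfolding KerQ_def by simp
qed

lemma ZL_imp_FAC:
  assumes "subgroup B G" "B \<noteq> carrier G" "q \<in> ZL G B"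
  shows "(B, KerQ G q) \<in> FAC G"
proof -
  have "B \<inter> KerQ G q = {\<one>}"
    using ZL_fixes_subgroup[OF assms(1,3)] ZL_one[OF assms(3)] subgroup.one_closed[OF assms(1)]
    unfolding KerQ_def by auto
  moreover have "B <#> KerQ G q = carrier G"
  proof
    show "B <#> KerQ G q \<subseteq> carrier G"
      using assms(1) subgroup.subset unfolding set_mult_def KerQ_def by fastforce
    show "carrier G \<subseteq> B <#> KerQ G q"
    proof
      fix a assume a: "a \<in> carrier G"
      then have "a = q a \<otimes> (inv (q a) \<otimes> a)"
        using ZL_carrier[OF assms(1,3)] by (simp add: m_assoc[symmetric])
      then show "a \<in> B <#> KerQ G q" unfolding set_mult_def
        using ZL_mem[OF assms(3) a] inv_ZL_mult_mem_KerQ[OF assms(1,3) a] by blast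
    qed
  qed
  ultimately show ?thesis
    unfolding FAC_def using assms subgroup_KerQ[OF assms(3)] by auto
qed

lemma desc_relI:
  assumes "q \<in> ZL G B" "q' \<in> ZL G B" "b0 \<in> B"
    and "\<And>a. a \<in> carrier G \<Longrightarrow> q a \<otimes> b0 = q' (a \<otimes> b0)"
  shows "(q, q') \<in> desc_rel G B"
  using assms unfolding desc_rel_def by blast

lemma desc_relE:
  assumes "(q, q') \<in> desc_rel G B"
  obtains b0 where "q \<in> ZL G B" "q' \<in> ZL G B" "b0 \<in> B"
    and "\<And>a. a \<in> carrier G \<Longrightarrow> q a \<otimes> b0 = q' (a \<otimes> b0)"
  using assms unfolding desc_rel_def by blast

lemma equiv_desc_rel:
  assumes "subgroup B G"
  shows "equiv (ZL G B) (desc_rel G B)"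
proof (rule equivI)
  note Bc = subgroup.mem_carrier[OF assms]
  show "desc_rel G B \<subseteq> ZL G B \<times> ZL G B" by (auto elim: desc_relE)
  show "refl_on (ZL G B) (desc_rel G B)"
  proof (rule refl_onI)
    fix q assume q: "q \<in> ZL G B"
    have "q a \<otimes> \<one> = q (a \<otimes> \<one>)" if "a \<in> carrier G" for a
      using that ZL_carrier[OF assms q that] by (simp only: r_one)
    then show "(q, q) \<in> desc_rel G B"
      by (rule desc_relI[OF q q subgroup.one_closed[OF assms]])
  qed
  show "sym (desc_rel G B)"
  proof (rule symI)
    fix q q' assume "(q, q') \<in> desc_rel G B"
    then obtain b0 where q: "q \<in> ZL G B" "q' \<in> ZL G B" and b0: "b0 \<in> B"
      and h: "\<And>a. a \<in> carrier G \<Longrightarrow> q a \<otimes> b0 = q' (a \<otimes> b0)" by (rule desc_relE) blast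
    have b0c: "b0 \<in> carrier G" using Bc b0 .
    have "q' a \<otimes> inv b0 = q (a \<otimes> inv b0)" if a: "a \<in> carrier G" for a
    proof -
      have qc: "q (a \<otimes> inv b0) \<in> carrier G" using ZL_carrier[OF assms q(1)] a b0c by simp
      have "q' a = q' (a \<otimes> inv b0 \<otimes> b0)" using a b0c by (simp add: m_assoc)
      also have "\<dots> = q (a \<otimes> inv b0) \<otimes> b0" using a b0c by (intro h[symmetric]) simp
      finally have "q' a \<otimes> inv b0 = q (a \<otimes> inv b0) \<otimes> b0 \<otimes> inv b0" by simp
      also have "\<dots> = q (a \<otimes> inv b0)" using qc b0c by (simp add: m_assoc)
      finally show ?thesis .
    qed
    then show "(q', q) \<in> desc_rel G B"
      by (rule desc_relI[OF q(2,1) subgroup.m_inv_closed[OF assms b0]])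
  qed
  show "trans (desc_rel G B)"
  proof (rule transI)
    fix q q' q'' assume "(q, q') \<in> desc_rel G B" "(q', q'') \<in> desc_rel G B"
    then obtain b0 b1 where q: "q \<in> ZL G B" "q'' \<in> ZL G B" and b: "b0 \<in> B" "b1 \<in> B"
      and h: "\<And>a. a \<in> carrier G \<Longrightarrow> q a \<otimes> b0 = q' (a \<otimes> b0)"
      and h': "\<And>a. a \<in> carrier G \<Longrightarrow> q' a \<otimes> b1 = q'' (a \<otimes> b1)"
      by (metis desc_relE)
    have bc: "b0 \<in> carrier G" "b1 \<in> carrier G" using Bc b by auto
    have "q a \<otimes> (b0 \<otimes> b1) = q'' (a \<otimes> (b0 \<otimes> b1))" if a: "a \<in> carrier G" for a
    proof -
      have "q a \<otimes> (b0 \<otimes> b1) = (q a \<otimes> b0) \<otimes> b1"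
        using bc ZL_carrier[OF assms q(1) a] by (simp add: m_assoc)
      also have "q a \<otimes> b0 = q' (a \<otimes> b0)" using a by (rule h)
      also have "q' (a \<otimes> b0) \<otimes> b1 = q'' (a \<otimes> b0 \<otimes> b1)" using a bc by (intro h') simp
      also have "a \<otimes> b0 \<otimes> b1 = a \<otimes> (b0 \<otimes> b1)" using a bc by (simp add: m_assoc)
      finally show ?thesis .
    qed
    then show "(q, q'') \<in> desc_rel G B"
      by (rule desc_relI[OF q subgroup.m_closed[OF assms b]])
  qed
qed

lemma fac_relI:
  "(B, X) \<in> FAC G \<Longrightarrow> (B, X') \<in> FAC G \<Longrightarrow> g \<in> carrier G \<Longrightarrow> X' = (g <# X) #> inv g
    \<Longrightarrow> ((B, X), (B, X')) \<in> fac_rel G"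
  unfolding fac_rel_def by blast

lemma fac_relE:
  assumes "((B, X), (B', X')) \<in> fac_rel G"
  obtains g where "(B, X) \<in> FAC G" "(B, X') \<in> FAC G" "B' = B" "g \<in> carrier G"
    "X' = (g <# X) #> inv g"
  using assms unfolding fac_rel_def by blast

lemma FAC_complement_subset: "(B, X) \<in> FAC G \<Longrightarrow> X \<subseteq> carrier G"
  unfolding FAC_def using subgroup.subset by blast

lemma equiv_fac_rel: "equiv (FAC G) (fac_rel G)"
proof (rule equivI)
  show "fac_rel G \<subseteq> FAC G \<times> FAC G" unfolding fac_rel_def by auto
  show "refl_on (FAC G) (fac_rel G)"
  proof (rule refl_onI)
    fix p assume p: "p \<in> FAC G"
    obtain B X where "p = (B, X)" by force
    with p show "(p, p) \<in> fac_rel G"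
      using fac_relI one_closed conj_set_one[symmetric] FAC_complement_subset by metis
  qed
  show "sym (fac_rel G)"
  proof (rule symI)
    fix p p' assume pp': "(p, p') \<in> fac_rel G"
    obtain B X B' X' where p: "p = (B, X)" and p': "p' = (B', X')" by force
    from pp'[unfolded p p'] obtain g where FAC: "(B, X) \<in> FAC G" "(B, X') \<in> FAC G"
      and B': "B' = B" and g: "g \<in> carrier G" and X': "X' = (g <# X) #> inv g"
      by (rule fac_relE)
    have "X = (inv g <# X') #> inv (inv g)"
      unfolding X' using conj_set_inv[OF FAC_complement_subset[OF FAC(1)] g] by (rule sym)
    then show "(p', p) \<in> fac_rel G"
      unfolding p p' B' using fac_relI[OF FAC(2,1) inv_closed[OF g]] by blast
  qed
  show "trans (fac_rel G)"
  proof (rule transI)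
    fix p p' p'' assume pp': "(p, p') \<in> fac_rel G" and p'p'': "(p', p'') \<in> fac_rel G"
    obtain B X B' X' B'' X'' where p: "p = (B, X)" and p': "p' = (B', X')"
      and p'': "p'' = (B'', X'')" by force
    from pp'[unfolded p p'] obtain g where FAC: "(B, X) \<in> FAC G"
      and B': "B' = B" and g: "g \<in> carrier G" and X': "X' = (g <# X) #> inv g"
      by (rule fac_relE)
    from p'p''[unfolded p' p''] obtain h where FAC'': "(B', X'') \<in> FAC G"
      and B'': "B'' = B'" and h: "h \<in> carrier G" and X'': "X'' = (h <# X') #> inv h"
      by (rule fac_relE)
    have "X'' = ((h \<otimes> g) <# X) #> inv (h \<otimes> g)"
      unfolding X'' X' using conj_set_comp[OF FAC_complement_subset[OF FAC] g h] .
    then show "(p, p'') \<in> fac_rel G"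
      unfolding p p'' B'' B' using fac_relI[OF FAC FAC''[unfolded B'] m_closed[OF h g]] by blast
  qed
qed

lemma desc_conj_apply:
  assumes B: "subgroup B G" and q: "q \<in> ZL G B" and q': "q' \<in> ZL G B" and b0: "b0 \<in> B"
    and x: "x \<in> carrier G" and desc: "q x \<otimes> b0 = q' (x \<otimes> b0)"
  shows "q' (inv b0 \<otimes> x \<otimes> b0) = inv b0 \<otimes> q x \<otimes> b0"
proof -
  have b0c: "b0 \<in> carrier G" using subgroup.mem_carrier[OF B b0] .
  have "q' (inv b0 \<otimes> x \<otimes> b0) = q' (inv b0 \<otimes> (x \<otimes> b0))"
    using b0c x by (simp add: m_assoc)
  also have "\<dots> = inv b0 \<otimes> q' (x \<otimes> b0)"
    using b0c x by (intro ZL_left_mult[OF q' _ subgroup.m_inv_closed[OF B b0]]) simp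
  also have "\<dots> = inv b0 \<otimes> (q x \<otimes> b0)" by (simp only: desc)
  finally show ?thesis using b0c ZL_carrier[OF B q x] by (simp add: m_assoc)
qed

lemma KerQ_desc_conj:
  assumes B: "subgroup B G" and q: "q \<in> ZL G B" and q': "q' \<in> ZL G B" and b0: "b0 \<in> B"
    and desc: "\<And>a. a \<in> carrier G \<Longrightarrow> q a \<otimes> b0 = q' (a \<otimes> b0)"
  shows "KerQ G q' = (inv b0 <# KerQ G q) #> inv (inv b0)"
proof -
  have b0c: "b0 \<in> carrier G" using subgroup.mem_carrier[OF B b0] .
  have conj: "q' (inv b0 \<otimes> x \<otimes> b0) = inv b0 \<otimes> q x \<otimes> b0" if "x \<in> carrier G" for x
    using desc_conj_apply[OF B q q' b0 that desc[OF that]] .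
  have "KerQ G q' = (\<lambda>x. inv b0 \<otimes> x \<otimes> b0) ` KerQ G q"
  proof (intro equalityI subsetI)
    fix a assume "a \<in> KerQ G q'"
    then have a: "a \<in> carrier G" "q' a = \<one>" unfolding KerQ_def by auto
    define x where "x = b0 \<otimes> a \<otimes> inv b0"
    have x: "x \<in> carrier G" using a b0c unfolding x_def by simp
    have ax: "a = inv b0 \<otimes> x \<otimes> b0"
      using a b0c unfolding x_def by (simp add: m_assoc) (simp add: m_assoc[symmetric])
    have "inv b0 \<otimes> q x \<otimes> b0 = \<one>" using conj[OF x] a(2) unfolding ax by simp
    then have "q x = \<one>" using conj_eq_one_iff b0c ZL_carrier[OF B q x] by simp
    with x ax show "a \<in> (\<lambda>x. inv b0 \<otimes> x \<otimes> b0) ` KerQ G q" unfolding KerQ_def by blast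
  next
    fix a assume "a \<in> (\<lambda>x. inv b0 \<otimes> x \<otimes> b0) ` KerQ G q"
    then obtain x where x: "x \<in> carrier G" "q x = \<one>" and ax: "a = inv b0 \<otimes> x \<otimes> b0"
      unfolding KerQ_def by blast
    have "q' a = \<one>"
      unfolding ax conj[OF x(1)] x(2) using b0c by (simp only: conj_eq_one_iff inv_closed one_closed)
    then show "a \<in> KerQ G q'" using ax x b0c unfolding KerQ_def by simp
  qed
  also have "\<dots> = (inv b0 <# KerQ G q) #> inv (inv b0)"
    using conj_set_eq_image[of "KerQ G q" "inv b0" "inv (inv b0)"] b0c unfolding KerQ_def by simp
  finally show ?thesis .
qed

lemma desc_rel_imp_fac_rel:
  assumes "subgroup B G" "B \<noteq> carrier G" "(q, q') \<in> desc_rel G B"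
  shows "((B, KerQ G q), (B, KerQ G q')) \<in> fac_rel G"
proof -
  obtain b0 where q: "q \<in> ZL G B" "q' \<in> ZL G B" and b0: "b0 \<in> B"
    and desc: "\<And>a. a \<in> carrier G \<Longrightarrow> q a \<otimes> b0 = q' (a \<otimes> b0)"
    using assms(3) by (rule desc_relE) blast
  show ?thesis
    using ZL_imp_FAC[OF assms(1,2) q(1)] ZL_imp_FAC[OF assms(1,2) q(2)]
      inv_closed[OF subgroup.mem_carrier[OF assms(1) b0]] KerQ_desc_conj[OF assms(1) q b0 desc]
    by (rule fac_relI)
qed

lemma FAC_decomp_unique:
  assumes "(B, X) \<in> FAC G" "a \<in> carrier G" "b \<in> B" "b' \<in> B" "inv b \<otimes> a \<in> X" "inv b' \<otimes> a \<in> X"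
  shows "b = b'"
proof -
  have B: "subgroup B G" and X: "subgroup X G" and BX: "B \<inter> X = {\<one>}"
    using assms(1) unfolding FAC_def by auto
  have bc: "b \<in> carrier G" "b' \<in> carrier G" using assms(3,4) subgroup.mem_carrier[OF B] by auto
  have "inv b' \<otimes> b = (inv b' \<otimes> a) \<otimes> inv (inv b \<otimes> a)"
    using bc assms(2) by (simp add: inv_mult_group m_assoc mult_inv_cancel_left)
  also have "\<dots> \<in> X" using assms(5,6) X subgroup.m_closed subgroup.m_inv_closed by metis
  finally have "inv b' \<otimes> b \<in> X" .
  moreover have "inv b' \<otimes> b \<in> B" using assms(3,4) B subgroup.m_closed subgroup.m_inv_closed by metis
  ultimately have "inv b' \<otimes> b = \<one>" using BX by blast
  then show ?thesis using bc by (metis inv_equality inv_inv inv_closed)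
qed

lemma FAC_decomp_exists:
  assumes "(B, X) \<in> FAC G" "a \<in> carrier G"
  shows "\<exists>b\<in>B. inv b \<otimes> a \<in> X"
proof -
  have B: "subgroup B G" and X: "subgroup X G" and "B <#> X = carrier G"
    using assms(1) unfolding FAC_def by auto
  then obtain b x where bx: "b \<in> B" "x \<in> X" "a = b \<otimes> x"
    using assms(2) unfolding set_mult_def by blast
  then have "inv b \<otimes> a = x"
    using subgroup.mem_carrier[OF B] subgroup.mem_carrier[OF X] inv_mult_cancel_left by simp
  then have "inv b \<otimes> a \<in> X" using bx(2) by simp
  with bx(1) show ?thesis by blast
qed

lemma complement_proj_decomp:
  assumes "(B, X) \<in> FAC G" "a \<in> carrier G"
  shows "complement_proj G B X a \<in> B" "inv (complement_proj G B X a) \<otimes> a \<in> X"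
proof -
  have "\<exists>!b. b \<in> B \<and> inv b \<otimes> a \<in> X"
    using FAC_decomp_exists[OF assms] FAC_decomp_unique[OF assms] by blast
  then have "complement_proj G B X a \<in> B \<and> inv (complement_proj G B X a) \<otimes> a \<in> X"
    unfolding complement_proj_def by (rule theI')
  then show "complement_proj G B X a \<in> B" "inv (complement_proj G B X a) \<otimes> a \<in> X" by auto
qed

lemma complement_proj_eqI:
  assumes "(B, X) \<in> FAC G" "a \<in> carrier G" "b \<in> B" "inv b \<otimes> a \<in> X"
  shows "complement_proj G B X a = b"
  using FAC_decomp_unique[OF assms(1,2) complement_proj_decomp(1)[OF assms(1,2)] assms(3)
      complement_proj_decomp(2)[OF assms(1,2)] assms(4)] .

lemma complement_proj_ZL:
  assumes FAC: "(B, X) \<in> FAC G"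
  shows "complement_proj G B X \<in> ZL G B"
proof -
  let ?q = "complement_proj G B X"
  have B: "subgroup B G" and X: "subgroup X G" using FAC unfolding FAC_def by auto
  note Bc = subgroup.mem_carrier[OF B]
  have qc: "?q a \<in> carrier G" if "a \<in> carrier G" for a
    using complement_proj_decomp(1)[OF FAC that] by (rule Bc)
  have "?q \<one> = \<one>"
    using subgroup.one_closed[OF B] subgroup.one_closed[OF X]
    by (intro complement_proj_eqI[OF FAC]) simp_all
  moreover have "?q (b \<otimes> a) = b \<otimes> ?q a" if a: "a \<in> carrier G" and b: "b \<in> B" for a b
  proof (rule complement_proj_eqI[OF FAC])
    show "b \<otimes> a \<in> carrier G" "b \<otimes> ?q a \<in> B"
      using a b Bc complement_proj_decomp(1)[OF FAC a] subgroup.m_closed[OF B] by auto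
    have "inv (b \<otimes> ?q a) \<otimes> (b \<otimes> a) = inv (?q a) \<otimes> a"
      using a b Bc qc by (simp add: inv_mult_group m_assoc inv_mult_cancel_left)
    then show "inv (b \<otimes> ?q a) \<otimes> (b \<otimes> a) \<in> X" using complement_proj_decomp(2)[OF FAC a] by simp
  qed
  moreover have "?q (a \<otimes> a') = ?q (a \<otimes> ?q a')" if a: "a \<in> carrier G" "a' \<in> carrier G" for a a'
  proof (rule complement_proj_eqI[OF FAC])
    let ?c = "?q (a \<otimes> ?q a')"
    have aq: "a \<otimes> ?q a' \<in> carrier G" using a qc by simp
    show "a \<otimes> a' \<in> carrier G" using a by simp
    show "?c \<in> B" using complement_proj_decomp(1)[OF FAC aq] .
    have "inv ?c \<otimes> (a \<otimes> a') = (inv ?c \<otimes> (a \<otimes> ?q a')) \<otimes> (inv (?q a') \<otimes> a')"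
      using a qc aq by (simp add: m_assoc mult_inv_cancel_left)
    also have "\<dots> \<in> X"
      using complement_proj_decomp(2)[OF FAC aq] complement_proj_decomp(2)[OF FAC a(2)] subgroup.m_closed[OF X]
      by blast
    finally show "inv ?c \<otimes> (a \<otimes> a') \<in> X" .
  qed
  moreover have "?q \<in> carrier G \<rightarrow> B" using complement_proj_decomp(1)[OF FAC] by blast
  ultimately show ?thesis unfolding ZL_def by blast
qed

lemma KerQ_complement_proj:
  assumes FAC: "(B, X) \<in> FAC G"
  shows "KerQ G (complement_proj G B X) = X"
proof (intro equalityI subsetI)
  have B: "subgroup B G" and X: "subgroup X G" using FAC unfolding FAC_def by auto
  fix x
  show "x \<in> X" if "x \<in> KerQ G (complement_proj G B X)"
    using that complement_proj_decomp(2)[OF FAC] unfolding KerQ_def by fastforce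
  show "x \<in> KerQ G (complement_proj G B X)" if x: "x \<in> X"
  proof -
    have xc: "x \<in> carrier G" using subgroup.mem_carrier[OF X x] .
    have "complement_proj G B X x = \<one>"
      using x xc subgroup.one_closed[OF B] by (intro complement_proj_eqI[OF FAC]) simp_all
    then show ?thesis using xc unfolding KerQ_def by simp
  qed
qed

lemma conj_KerQ_imp_desc_rel:
  assumes B: "subgroup B G" and q: "q \<in> ZL G B" and q': "q' \<in> ZL G B" and g: "g \<in> carrier G"
    and K: "KerQ G q' = (g <# KerQ G q) #> inv g"
  shows "(q, q') \<in> desc_rel G B"
proof -
  note Bc = subgroup.mem_carrier[OF B]
  have Ksub: "subgroup (KerQ G q) G" using subgroup_KerQ[OF q] .
  note Kc = subgroup.mem_carrier[OF Ksub]
  define b where "b = q g"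
  define x0 where "x0 = inv b \<otimes> g"
  have b: "b \<in> B" "b \<in> carrier G" unfolding b_def using ZL_mem[OF q g] Bc by auto
  have x0: "x0 \<in> KerQ G q" unfolding x0_def b_def using inv_ZL_mult_mem_KerQ[OF B q g] .
  have g_eq: "g = b \<otimes> x0" unfolding x0_def using b g mult_inv_cancel_left by simp
  have "q a \<otimes> inv b = q' (a \<otimes> inv b)" if a: "a \<in> carrier G" for a
  proof (rule ZL_eq_of_inv_mult_mem_KerQ[OF B q', symmetric])
    have qa: "q a \<in> B" "q a \<in> carrier G" using ZL_mem[OF q a] Bc by auto
    define y where "y = inv (q a) \<otimes> a"
    have y: "y \<in> KerQ G q" unfolding y_def using inv_ZL_mult_mem_KerQ[OF B q a] .
    have "inv x0 \<otimes> y \<otimes> x0 \<in> KerQ G q"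
      using Ksub x0 y subgroup.m_closed subgroup.m_inv_closed by metis
    moreover have "inv (q a \<otimes> inv b) \<otimes> (a \<otimes> inv b) = g \<otimes> (inv x0 \<otimes> y \<otimes> x0) \<otimes> inv g"
      unfolding g_eq y_def using qa a b Kc[OF x0]
      by (simp add: m_assoc inv_mult_group mult_inv_cancel_left)
    ultimately show "inv (q a \<otimes> inv b) \<otimes> (a \<otimes> inv b) \<in> KerQ G q'"
      unfolding K using conj_set_eq_image[of "KerQ G q" g "inv g"] Kc by auto
    show "q a \<otimes> inv b \<in> B" using qa(1) b(1) B subgroup.m_closed subgroup.m_inv_closed by metis
    show "a \<otimes> inv b \<in> carrier G" using a b by simp
  qed
  then show ?thesis by (rule desc_relI[OF q q' subgroup.m_inv_closed[OF B b(1)]])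
qed

lemma ker_map_class:
  assumes "subgroup B G" "B \<noteq> carrier G" "q \<in> ZL G B"
  shows "ker_map G (B, desc_rel G B `` {q}) = fac_rel G `` {(B, KerQ G q)}"
proof -
  let ?f = "\<lambda>q. fac_rel G `` {(B, KerQ G q)}"
  have "?f q' = ?f q" if "q' \<in> desc_rel G B `` {q}" for q'
    using equiv_class_eq[OF equiv_fac_rel desc_rel_imp_fac_rel[OF assms(1,2)]] that by simp
  moreover have "q \<in> desc_rel G B `` {q}"
    using equiv_class_self[OF equiv_desc_rel[OF assms(1)] assms(3)] .
  ultimately have "?f ` (desc_rel G B `` {q}) = {?f q}" by blast
  then show ?thesis unfolding ker_map_def by simp
qed

lemma Sigma_Desc1E:
  assumes "(B, C) \<in> (SIGMA B:{B. subgroup B G \<and> B \<noteq> carrier G}. Desc1 G B)"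
  obtains q where "subgroup B G" "B \<noteq> carrier G" "q \<in> ZL G B" "C = desc_rel G B `` {q}"
  using assms unfolding Desc1_def by (auto elim!: quotientE)

lemma inj_on_ker_map:
  "inj_on (ker_map G) (SIGMA B:{B. subgroup B G \<and> B \<noteq> carrier G}. Desc1 G B)"
proof (rule inj_onI)
  fix p p'
  assume p: "p \<in> (SIGMA B:{B. subgroup B G \<and> B \<noteq> carrier G}. Desc1 G B)"
    and p': "p' \<in> (SIGMA B:{B. subgroup B G \<and> B \<noteq> carrier G}. Desc1 G B)"
    and eq: "ker_map G p = ker_map G p'"
  obtain B C B' C' where pe: "p = (B, C)" "p' = (B', C')" by force
  obtain q where B: "subgroup B G" "B \<noteq> carrier G" and q: "q \<in> ZL G B"
    and C: "C = desc_rel G B `` {q}" using p[unfolded pe] by (rule Sigma_Desc1E)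
  obtain q' where B': "subgroup B' G" "B' \<noteq> carrier G" and q': "q' \<in> ZL G B'"
    and C': "C' = desc_rel G B' `` {q'}" using p'[unfolded pe] by (rule Sigma_Desc1E)
  have "fac_rel G `` {(B, KerQ G q)} = fac_rel G `` {(B', KerQ G q')}"
    using eq unfolding pe C C' ker_map_class[OF B q] ker_map_class[OF B' q'] .
  then have "((B, KerQ G q), (B', KerQ G q')) \<in> fac_rel G"
    using eq_equiv_class[OF _ equiv_fac_rel ZL_imp_FAC[OF B' q']] by blast
  then obtain g where BB': "B' = B" and g: "g \<in> carrier G"
    and K: "KerQ G q' = (g <# KerQ G q) #> inv g" by (rule fac_relE)
  have "(q, q') \<in> desc_rel G B"
    using conj_KerQ_imp_desc_rel[OF B(1) q _ g K] q' BB' by simp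
  then have "C = C'" unfolding C C' BB' by (rule equiv_class_eq[OF equiv_desc_rel[OF B(1)]])
  then show "p = p'" unfolding pe BB' by simp
qed

lemma ker_map_image:
  "ker_map G ` (SIGMA B:{B. subgroup B G \<and> B \<noteq> carrier G}. Desc1 G B) = Fac G"
proof (intro equalityI subsetI)
  fix Y assume "Y \<in> ker_map G ` (SIGMA B:{B. subgroup B G \<and> B \<noteq> carrier G}. Desc1 G B)"
  then obtain B C where BC: "(B, C) \<in> (SIGMA B:{B. subgroup B G \<and> B \<noteq> carrier G}. Desc1 G B)"
    and Y: "Y = ker_map G (B, C)" by auto
  obtain q where B: "subgroup B G" "B \<noteq> carrier G" and q: "q \<in> ZL G B"
    and C: "C = desc_rel G B `` {q}" using BC by (rule Sigma_Desc1E)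
  have "Y = fac_rel G `` {(B, KerQ G q)}" unfolding Y C using ker_map_class[OF B q] .
  then show "Y \<in> Fac G" unfolding Fac_def using quotientI[OF ZL_imp_FAC[OF B q]] by simp
next
  fix Y assume "Y \<in> Fac G"
  then obtain B X where FAC: "(B, X) \<in> FAC G" and Y: "Y = fac_rel G `` {(B, X)}"
    unfolding Fac_def by (auto elim!: quotientE)
  have B: "subgroup B G" "B \<noteq> carrier G" using FAC unfolding FAC_def by auto
  let ?q = "complement_proj G B X"
  have q: "?q \<in> ZL G B" using complement_proj_ZL[OF FAC] .
  have "(B, desc_rel G B `` {?q}) \<in> (SIGMA B:{B. subgroup B G \<and> B \<noteq> carrier G}. Desc1 G B)"
    unfolding Desc1_def using B quotientI[OF q] by simp
  moreover have "Y = ker_map G (B, desc_rel G B `` {?q})"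
    unfolding Y ker_map_class[OF B q] KerQ_complement_proj[OF FAC] ..
  ultimately show "Y \<in> ker_map G ` (SIGMA B:{B. subgroup B G \<and> B \<noteq> carrier G}. Desc1 G B)"
    by blast
qed

end

theorem theorem4p9:
  fixes G :: "('a, 'b) monoid_scheme"
  assumes "group G"
  shows "(\<forall>B. subgroup B G \<and> B \<noteq> carrier G \<longrightarrow> (\<forall>q\<in>ZL G B. (B, KerQ G q) \<in> FAC G))
    \<and> (\<forall>B. subgroup B G \<and> B \<noteq> carrier G \<longrightarrow>
         (\<forall>q q'. (q, q') \<in> desc_rel G B \<longrightarrow> ((B, KerQ G q), (B, KerQ G q')) \<in> fac_rel G))
    \<and> bij_betw (ker_map G) (SIGMA B:{B. subgroup B G \<and> B \<noteq> carrier G}. Desc1 G B) (Fac G)"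
proof -
  interpret group G by fact
  show ?thesis
    using ZL_imp_FAC desc_rel_imp_fac_rel inj_on_ker_map ker_map_image
    unfolding bij_betw_def by blast
qed

end
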